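(* Suppose each population has a weakly dominating strategy, in the following sense: for population 1, either $a(r)\ge c(r)$ and $b(r)\ge d(r)$ for all $r\in[0,1]$ with both inequalities strict for all $r\in(0,1)$, or $c(r)\ge a(r)$ and $d(r)\ge b(r)$ for all $r\in[0,1]$ with both inequalities strict for all $r\in(0,1)$; and for population 2, either $e(r)\ge g(r)$ and $f(r)\ge k(r)$ for all $r\in[0,1]$ with both inequalities strict for all $r\in(0,1)$, or $g(r)\ge e(r)$ and $k(r)\ge f(r)$ for all $r\in[0,1]$ with both inequalities strict for all $r\in(0,1)$. Then for every initial condition $(x_0,y_0,r_0)\in(0,1)^3$, the solution $(x(t),y(t),r(t))$ of $(\ast)$ converges to the boundary of the cube $[0,1]^3$, i.e. its distance to $\partial[0,1]^3$ tends to $0$ as $t\to\infty$.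
   Context: Two-population co-evolutionary system. Let $a,b,c,d,e,f,g,k:[0,1]\to\mathbb{R}$ be affine functions of the environmental variable $r$. Population 1 has payoff matrix $A(r)=\begin{bmatrix}a(r)&b(r)\\ c(r)&d(r)\end{bmatrix}$, population 2 has payoff matrix $B(r)=\begin{bmatrix}e(r)&f(r)\\ g(r)&k(r)\end{bmatrix}$. Let $\theta_1,\theta_2>0$. The system $(\ast)$ on $[0,1]^3$ with state $(x,y,r)$ ($x$, $y$ the fractions of strategy 1 in populations 1 and 2, $r$ the environmental state) is $\dot x = x(1-x)F(y,r)$, $\dot y = y(1-y)G(x,r)$, $\dot r = r(1-r)H(x,y)$, where $F(y,r)=(a(r)-b(r)-c(r)+d(r))y+b(r)-d(r)$, $G(x,r)=(e(r)-f(r)-g(r)+k(r))x+f(r)-k(r)$, $H(x,y)=(1+\theta_1)x+(1+\theta_2)y-2$. *)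

theory Defs
  imports "HOL-Analysis.Analysis"
begin

definition affine_fun :: "(real \<Rightarrow> real) \<Rightarrow> bool" where
  "affine_fun h \<longleftrightarrow> (\<exists>p q. \<forall>r. h r = p + q * r)"

definition weakly_dominates :: "(real \<Rightarrow> real) \<Rightarrow> (real \<Rightarrow> real) \<Rightarrow> (real \<Rightarrow> real) \<Rightarrow> (real \<Rightarrow> real) \<Rightarrow> bool" where
  "weakly_dominates p1 p2 q1 q2 \<longleftrightarrow>
     (\<forall>r\<in>{0..1}. p1 r \<ge> q1 r \<and> p2 r \<ge> q2 r) \<and>
     (\<forall>r\<in>{0<..<1}. p1 r > q1 r \<and> p2 r > q2 r)"

definition unit_cube3 :: "(real \<times> real \<times> real) set" where
  "unit_cube3 = cbox (0,0,0) (1,1,1)"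

end

theory Submission
  imports Defs
begin

text \<open>
  The logistic factors \<open>x (1 - x)\<close>, \<open>y (1 - y)\<close>, \<open>r (1 - r)\<close> vanish on the faces, so a
  Gronwall estimate keeps the solution in the open cube; there \<open>\<bar>r'\<bar> \<le> 2 + \<theta>1 + \<theta>2\<close>, so
  \<open>r\<close> is Lipschitz. If, say, the first strategy of population 1 weakly dominates, the logit
  \<open>ln x - ln (1 - x)\<close> has derivative \<open>y (a - c)(r) + (1 - y) (b - d)(r) \<ge> 0\<close>, bounded below by
  some \<open>m > 0\<close> while \<open>r \<in> [\<epsilon>/2, 1 - \<epsilon>/2]\<close>. By the Lipschitz bound, every visit of \<open>r\<close> to
  \<open>[\<epsilon>, 1 - \<epsilon>]\<close> is followed by a time interval of fixed length on which the logit gains a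
  fixed amount. If \<open>x\<close> and \<open>r\<close> were both in \<open>[\<epsilon>, 1 - \<epsilon>]\<close> at arbitrarily late times, the
  logit would thus be unbounded, yet it is at most \<open>ln (1 - \<epsilon>) - ln \<epsilon>\<close> at those times.
  Hence eventually \<open>x\<close> or \<open>r\<close> is \<open>\<epsilon>\<close>-close to \<open>0\<close> or \<open>1\<close>, which bounds the distance to the
  boundary of the cube.
\<close>

lemma DERIV_nonneg_imp_increasing_halfline:
  fixes f f' :: "real \<Rightarrow> real"
  assumes deriv: "\<And>t. t \<ge> 0 \<Longrightarrow> (f has_real_derivative f' t) (at t within {0..})"
    and "0 \<le> s" "s \<le> u" and nonneg: "\<And>t. s < t \<Longrightarrow> t < u \<Longrightarrow> f' t \<ge> 0"
  shows "f s \<le> f u"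
proof -
  have "continuous_on {0..} f"
    by (rule DERIV_continuous_on) (use deriv in auto)
  then have "continuous_on {s..u} f"
    by (rule continuous_on_subset) (use \<open>0 \<le> s\<close> in auto)
  moreover have "(f has_real_derivative f' t) (at t)" if "s < t" for t
  proof -
    have "at t within {0..} = at t"
      using that \<open>0 \<le> s\<close> by (intro at_within_interior) auto
    with deriv[of t] that \<open>0 \<le> s\<close> show ?thesis by auto
  qed
  ultimately show ?thesis
    using nonneg \<open>0 \<le> s\<close>
    by (intro DERIV_nonneg_imp_increasing_open[OF \<open>s \<le> u\<close>])
       (auto simp del: greaterThanLessThan_iff)
qed

lemma DERIV_bounded_imp_lipschitz_halfline:
  fixes f f' :: "real \<Rightarrow> real"
  assumes deriv: "\<And>t. t \<ge> 0 \<Longrightarrow> (f has_real_derivative f' t) (at t within {0..})"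
    and bound: "\<And>t. t \<ge> 0 \<Longrightarrow> \<bar>f' t\<bar> \<le> L"
    and "0 \<le> t" "t \<le> s"
  shows "\<bar>f s - f t\<bar> \<le> L * (s - t)"
proof -
  have "L * t - f t \<le> L * s - f s"
  proof (rule DERIV_nonneg_imp_increasing_halfline[where f = "\<lambda>v. L * v - f v"
        and f' = "\<lambda>u. L - f' u"])
    show "((\<lambda>v. L * v - f v) has_real_derivative L - f' u) (at u within {0..})" if "u \<ge> 0" for u
      by (rule derivative_eq_intros refl deriv[OF that])+ simp
    show "L - f' u \<ge> 0" if "t < u" for u
      using bound[of u] that \<open>0 \<le> t\<close> by (simp add: abs_le_iff)
  qed (use assms in auto)
  moreover have "L * t + f t \<le> L * s + f s"
  proof (rule DERIV_nonneg_imp_increasing_halfline[where f = "\<lambda>v. L * v + f v"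
        and f' = "\<lambda>u. L + f' u"])
    show "((\<lambda>v. L * v + f v) has_real_derivative L + f' u) (at u within {0..})" if "u \<ge> 0" for u
      by (rule derivative_eq_intros refl deriv[OF that])+ simp
    show "L + f' u \<ge> 0" if "t < u" for u
      using bound[of u] that \<open>0 \<le> t\<close> by (simp add: abs_le_iff)
  qed (use assms in auto)
  ultimately show ?thesis
    by (simp add: abs_le_iff algebra_simps)
qed

text \<open>A Gronwall-type argument: \<open>z t * exp (K * t)\<close> is nondecreasing.\<close>
lemma DERIV_ge_neg_linear_imp_pos:
  fixes z D :: "real \<Rightarrow> real"
  assumes deriv: "\<And>t. t \<ge> 0 \<Longrightarrow> (z has_real_derivative D t) (at t within {0..})"
    and "T \<ge> 0" and lower: "\<And>t. 0 < t \<Longrightarrow> t < T \<Longrightarrow> D t \<ge> - K * z t"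
    and "z 0 > 0"
  shows "z T > 0"
proof -
  have "z 0 * exp (K * 0) \<le> z T * exp (K * T)"
  proof (rule DERIV_nonneg_imp_increasing_halfline[where f = "\<lambda>t. z t * exp (K * t)"
        and f' = "\<lambda>t. exp (K * t) * (D t + K * z t)"])
    show "((\<lambda>t. z t * exp (K * t)) has_real_derivative exp (K * t) * (D t + K * z t))
        (at t within {0..})" if "t \<ge> 0" for t
      by (rule derivative_eq_intros refl deriv[OF that])+ (simp add: algebra_simps)
    show "exp (K * t) * (D t + K * z t) \<ge> 0" if "0 < t" "t < T" for t
      using lower[OF that] by simp
  qed (use \<open>T \<ge> 0\<close> in auto)
  with \<open>z 0 > 0\<close> have "z T * exp (K * T) > 0"
    by simp
  then show ?thesis
    by (simp add: zero_less_mult_iff)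
qed

lemma first_exit_induct_halfline [consumes 1, case_names closed persists]:
  fixes P :: "real \<Rightarrow> bool"
  assumes "t \<ge> 0"
    and closed: "\<And>T. T \<ge> 0 \<Longrightarrow> (\<And>s. 0 \<le> s \<Longrightarrow> s < T \<Longrightarrow> P s) \<Longrightarrow> P T"
    and persists: "\<And>T. T \<ge> 0 \<Longrightarrow> P T \<Longrightarrow> eventually P (at_right T)"
  shows "P t"
proof (rule ccontr)
  assume "\<not> P t"
  define S where "S = {s. 0 \<le> s \<and> \<not> P s}"
  have "S \<noteq> {}" "bdd_below S"
    using \<open>\<not> P t\<close> \<open>t \<ge> 0\<close> by (auto simp: S_def intro: bdd_belowI[of _ 0])
  define T where "T = Inf S"
  have "T \<ge> 0"
    unfolding T_def by (rule cInf_greatest[OF \<open>S \<noteq> {}\<close>]) (auto simp: S_def)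
  have before: "P s" if "0 \<le> s" "s < T" for s
    using that cInf_lower[OF _ \<open>bdd_below S\<close>, of s] by (force simp: S_def T_def)
  then have "P T"
    using closed \<open>T \<ge> 0\<close> by blast
  then obtain b where "b > T" and after: "\<And>s. T < s \<Longrightarrow> s < b \<Longrightarrow> P s"
    using persists[OF \<open>T \<ge> 0\<close>] by (auto simp: eventually_at_right_field)
  have "b \<le> T"
    unfolding T_def
  proof (rule cInf_greatest[OF \<open>S \<noteq> {}\<close>])
    fix s assume "s \<in> S"
    then have "T \<le> s" "\<not> P s"
      using cInf_lower[OF _ \<open>bdd_below S\<close>] by (auto simp: S_def T_def)
    then show "b \<le> s"
      using after \<open>P T\<close> by (metis le_less not_le)
  qed
  with \<open>b > T\<close> show False by simp
qed

lemma logistic_term_bounds: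
  fixes z W K :: real
  assumes "0 \<le> z" "z \<le> 1" and "\<bar>W\<bar> \<le> K"
  shows "z * (1 - z) * W \<ge> - K * z"
    and "- (z * (1 - z) * W) \<ge> - K * (1 - z)"
    and "\<bar>z * (1 - z) * W\<bar> \<le> K"
proof -
  have "K \<ge> 0" using \<open>\<bar>W\<bar> \<le> K\<close> by linarith
  have zz: "0 \<le> z * (1 - z)" "z * (1 - z) \<le> z" "z * (1 - z) \<le> 1 - z"
    using assms(1,2) by (auto simp: mult_left_le mult_left_le_one_le)
  have "\<bar>z * (1 - z) * W\<bar> = z * (1 - z) * \<bar>W\<bar>"
    by (simp only: abs_mult[of "z * (1 - z)" W] abs_of_nonneg[OF zz(1)])
  also have "\<dots> \<le> z * (1 - z) * K"
    using zz(1) \<open>\<bar>W\<bar> \<le> K\<close> by (rule mult_left_mono[rotated])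
  finally have "\<bar>z * (1 - z) * W\<bar> \<le> z * (1 - z) * K" .
  moreover have "z * (1 - z) * K \<le> z * K" "z * (1 - z) * K \<le> (1 - z) * K"
    using zz \<open>K \<ge> 0\<close> by (auto intro: mult_right_mono)
  moreover have "z * K \<le> K"
    using mult_right_mono[OF assms(2) \<open>K \<ge> 0\<close>] by simp
  ultimately show "z * (1 - z) * W \<ge> - K * z" "- (z * (1 - z) * W) \<ge> - K * (1 - z)"
    and "\<bar>z * (1 - z) * W\<bar> \<le> K"
    by (auto simp: abs_le_iff algebra_simps)
qed

lemma logistic_stays_in_open_unit_interval:
  fixes z W :: "real \<Rightarrow> real"
  assumes deriv: "\<And>t. t \<ge> 0 \<Longrightarrow> (z has_real_derivative z t * (1 - z t) * W t) (at t within {0..})"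
    and "z 0 \<in> {0<..<1}" "T \<ge> 0"
    and before: "\<And>s. 0 < s \<Longrightarrow> s < T \<Longrightarrow> z s \<in> {0..1} \<and> \<bar>W s\<bar> \<le> K"
  shows "z T \<in> {0<..<1}"
proof -
  have "z T > 0"
    by (rule DERIV_ge_neg_linear_imp_pos[OF deriv \<open>T \<ge> 0\<close>])
       (use before logistic_term_bounds(1) \<open>z 0 \<in> {0<..<1}\<close> in auto)
  moreover have "1 - z T > 0"
  proof (rule DERIV_ge_neg_linear_imp_pos[OF _ \<open>T \<ge> 0\<close>])
    show "((\<lambda>s. 1 - z s) has_real_derivative - (z t * (1 - z t) * W t)) (at t within {0..})"
      if "t \<ge> 0" for t
      using DERIV_diff[OF DERIV_const deriv[OF that]] by simp
  qed (use before logistic_term_bounds(2) \<open>z 0 \<in> {0<..<1}\<close> in auto)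
  ultimately show ?thesis by simp
qed

lemma logistic_system_stays_in_open_cube:
  fixes x y r F G H :: "real \<Rightarrow> real"
  assumes dx: "\<And>t. t \<ge> 0 \<Longrightarrow> (x has_real_derivative x t * (1 - x t) * F t) (at t within {0..})"
    and dy: "\<And>t. t \<ge> 0 \<Longrightarrow> (y has_real_derivative y t * (1 - y t) * G t) (at t within {0..})"
    and dr: "\<And>t. t \<ge> 0 \<Longrightarrow> (r has_real_derivative r t * (1 - r t) * H t) (at t within {0..})"
    and bounded: "\<And>t. t \<ge> 0 \<Longrightarrow> x t \<in> {0..1} \<Longrightarrow> y t \<in> {0..1} \<Longrightarrow> r t \<in> {0..1} \<Longrightarrow>
                   \<bar>F t\<bar> \<le> K \<and> \<bar>G t\<bar> \<le> K \<and> \<bar>H t\<bar> \<le> K"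
    and init: "x 0 \<in> {0<..<1}" "y 0 \<in> {0<..<1}" "r 0 \<in> {0<..<1}"
    and "t \<ge> 0"
  shows "x t \<in> {0<..<1} \<and> y t \<in> {0<..<1} \<and> r t \<in> {0<..<1}"
  using \<open>t \<ge> 0\<close>
proof (induction t rule: first_exit_induct_halfline)
  case (closed T)
  have "x s \<in> {0..1} \<and> \<bar>F s\<bar> \<le> K" "y s \<in> {0..1} \<and> \<bar>G s\<bar> \<le> K"
    "r s \<in> {0..1} \<and> \<bar>H s\<bar> \<le> K" if "0 < s" "s < T" for s
    using that bounded[of s] closed(2)[of s] by auto
  then show ?case
    using logistic_stays_in_open_unit_interval[OF dx init(1) \<open>T \<ge> 0\<close>]
      logistic_stays_in_open_unit_interval[OF dy init(2) \<open>T \<ge> 0\<close>]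
      logistic_stays_in_open_unit_interval[OF dr init(3) \<open>T \<ge> 0\<close>]
    by meson
next
  case (persists T)
  have stays: "eventually (\<lambda>s. z s \<in> {0<..<1}) (at_right T)"
    if "(z has_real_derivative z') (at T within {0..})" "z T \<in> {0<..<1}" for z z'
  proof -
    have "(z \<longlongrightarrow> z T) (at_right T)"
      using DERIV_continuous[OF that(1)] \<open>T \<ge> 0\<close>
      by (auto simp: continuous_within intro: tendsto_within_subset)
    then show ?thesis
      using that(2) order_tendstoD[of z "z T" "at_right T"] by (auto intro: eventually_conj)
  qed
  from persists have now: "x T \<in> {0<..<1}" "y T \<in> {0<..<1}" "r T \<in> {0<..<1}"
    by auto
  show ?case
    using eventually_conj[OF stays[OF dx[OF \<open>T \<ge> 0\<close>] now(1)]
        eventually_conj[OF stays[OF dy[OF \<open>T \<ge> 0\<close>] now(2)] stays[OF dr[OF \<open>T \<ge> 0\<close>] now(3)]]]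
    by simp
qed

lemma affine_fun_diff: "affine_fun h1 \<Longrightarrow> affine_fun h2 \<Longrightarrow> affine_fun (\<lambda>s. h1 s - h2 s)"
  unfolding affine_fun_def by (metis (no_types) add_diff_add left_diff_distrib)

lemma affine_fun_abs_bounded:
  assumes "affine_fun h"
  obtains C where "\<And>s. s \<in> {0..1} \<Longrightarrow> \<bar>h s\<bar> \<le> C"
proof -
  obtain p q where h: "\<And>s. h s = p + q * s"
    using assms unfolding affine_fun_def by blast
  have "\<bar>h s\<bar> \<le> \<bar>p\<bar> + \<bar>q\<bar>" if "s \<in> {0..1}" for s
  proof -
    have "\<bar>q * s\<bar> \<le> \<bar>q\<bar>"
      using that by (simp add: abs_mult mult_left_le)
    then show ?thesis
      unfolding h by linarith
  qed
  then show ?thesis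
    using that by blast
qed

lemma affine_fun_ge_min_endpoints:
  assumes "affine_fun h" "\<alpha> \<le> s" "s \<le> \<beta>"
  shows "min (h \<alpha>) (h \<beta>) \<le> h s"
proof -
  obtain p q where h: "\<And>s. h s = p + q * s"
    using assms(1) unfolding affine_fun_def by blast
  show ?thesis
  proof (cases "q \<ge> 0")
    case True
    then have "q * \<alpha> \<le> q * s"
      using assms by (simp add: mult_left_mono)
    then show ?thesis unfolding h by linarith
  next
    case False
    then have "q * \<beta> \<le> q * s"
      using assms by (simp add: mult_left_mono_neg)
    then show ?thesis unfolding h by linarith
  qed
qed

lemma affine_fun_pos_bounded_below:
  assumes "affine_fun h" and pos: "\<And>s. s \<in> {0<..<1} \<Longrightarrow> h s > 0" and "0 < \<delta>" "\<delta> < 1"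
  obtains m where "m > 0" "\<And>s. s \<in> {\<delta>..1 - \<delta>} \<Longrightarrow> m \<le> h s"
proof
  show "min (h \<delta>) (h (1 - \<delta>)) > 0"
    using pos \<open>0 < \<delta>\<close> \<open>\<delta> < 1\<close> by simp
  show "min (h \<delta>) (h (1 - \<delta>)) \<le> h s" if "s \<in> {\<delta>..1 - \<delta>}" for s
    using affine_fun_ge_min_endpoints[OF \<open>affine_fun h\<close>] that by simp
qed

lemma affine_mix_abs_bounded:
  assumes "affine_fun p" "affine_fun q"
  obtains K where "\<And>y s. y \<in> {0..1::real} \<Longrightarrow> s \<in> {0..1} \<Longrightarrow> \<bar>y * p s + (1 - y) * q s\<bar> \<le> K"
proof -
  obtain Cp Cq where Cp: "\<And>s. s \<in> {0..1} \<Longrightarrow> \<bar>p s\<bar> \<le> Cp"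
    and Cq: "\<And>s. s \<in> {0..1} \<Longrightarrow> \<bar>q s\<bar> \<le> Cq"
    using affine_fun_abs_bounded assms by metis
  have "\<bar>y * p s + (1 - y) * q s\<bar> \<le> Cp + Cq" if "y \<in> {0..1}" "s \<in> {0..1}" for y s
  proof -
    have "\<bar>y * p s\<bar> \<le> \<bar>p s\<bar>" "\<bar>(1 - y) * q s\<bar> \<le> \<bar>q s\<bar>"
      using that(1) by (auto simp: abs_mult mult_left_le_one_le)
    then show ?thesis
      using Cp[OF that(2)] Cq[OF that(2)] by linarith
  qed
  then show ?thesis
    using that by blast
qed

lemma weakly_dominates_mix_nonneg:
  fixes y s :: real
  assumes "weakly_dominates p1 p2 q1 q2" "y \<in> {0..1}" "s \<in> {0..1}"
  shows "0 \<le> y * (p1 s - q1 s) + (1 - y) * (p2 s - q2 s)"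
  using assms unfolding weakly_dominates_def by (auto intro!: add_nonneg_nonneg mult_nonneg_nonneg)

lemma weakly_dominates_mix_bounded_below:
  assumes "affine_fun p1" "affine_fun p2" "affine_fun q1" "affine_fun q2"
    and "weakly_dominates p1 p2 q1 q2" "0 < \<delta>" "\<delta> < 1"
  obtains m where "m > 0"
    "\<And>y s. y \<in> {0..1::real} \<Longrightarrow> s \<in> {\<delta>..1 - \<delta>} \<Longrightarrow> m \<le> y * (p1 s - q1 s) + (1 - y) * (p2 s - q2 s)"
proof -
  have pos: "p1 s - q1 s > 0" "p2 s - q2 s > 0" if "s \<in> {0<..<1}" for s
    using assms(5) that unfolding weakly_dominates_def by auto
  obtain m1 where m1: "m1 > 0" "\<And>s. s \<in> {\<delta>..1 - \<delta>} \<Longrightarrow> m1 \<le> p1 s - q1 s"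
    using affine_fun_pos_bounded_below[OF affine_fun_diff[OF assms(1,3)] pos(1) \<open>0 < \<delta>\<close> \<open>\<delta> < 1\<close>] by blast
  obtain m2 where m2: "m2 > 0" "\<And>s. s \<in> {\<delta>..1 - \<delta>} \<Longrightarrow> m2 \<le> p2 s - q2 s"
    using affine_fun_pos_bounded_below[OF affine_fun_diff[OF assms(2,4)] pos(2) \<open>0 < \<delta>\<close> \<open>\<delta> < 1\<close>] by blast
  show ?thesis
  proof (rule that[of "min m1 m2"])
    fix y s :: real assume "y \<in> {0..1}" "s \<in> {\<delta>..1 - \<delta>}"
    then have "y * min m1 m2 \<le> y * (p1 s - q1 s)" "(1 - y) * min m1 m2 \<le> (1 - y) * (p2 s - q2 s)"
      using m1(2)[of s] m2(2)[of s] by (auto intro!: mult_left_mono)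
    then show "min m1 m2 \<le> y * (p1 s - q1 s) + (1 - y) * (p2 s - q2 s)"
      by (simp add: algebra_simps)
  qed (use m1 m2 in simp)
qed

lemma has_real_derivative_logit:
  fixes z :: "real \<Rightarrow> real"
  assumes deriv: "(z has_real_derivative z t * (1 - z t) * W) (at t within S)"
    and "z t \<in> {0<..<1}"
  shows "((\<lambda>s. ln (z s) - ln (1 - z s)) has_real_derivative W) (at t within S)"
  using \<open>z t \<in> {0<..<1}\<close>
  by (auto intro!: derivative_eq_intros deriv simp: inverse_eq_divide field_simps)

lemma unbounded_of_frequent_increments:
  fixes U :: "real \<Rightarrow> real"
  assumes mono: "\<And>s t. 0 \<le> s \<Longrightarrow> s \<le> t \<Longrightarrow> U s \<le> U t"
    and increment: "\<And>t. t \<ge> 0 \<Longrightarrow> Q t \<Longrightarrow> U t + \<delta> \<le> U (t + h)"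
    and "\<delta> > 0" "h \<ge> 0"
    and frequent: "\<exists>\<^sub>F t in at_top. Q t"
  obtains t where "t \<ge> 0" "U t > B"
proof -
  have grow: "\<exists>t\<ge>0. U 0 + real n * \<delta> \<le> U t" for n :: nat
  proof (induction n)
    case 0
    show ?case by auto
  next
    case (Suc n)
    then obtain t where "t \<ge> 0" "U 0 + real n * \<delta> \<le> U t"
      by blast
    moreover obtain t' where "t' \<ge> t" "Q t'"
      using frequent by (auto simp: frequently_def eventually_at_top_linorder)
    ultimately have "U 0 + real (Suc n) * \<delta> \<le> U (t' + h)" "t' + h \<ge> 0"
      using mono[of t t'] increment[of t'] \<open>h \<ge> 0\<close> by (auto simp: algebra_simps)
    then show ?case
      by blast
  qed
  obtain n :: nat where "B - U 0 < real n * \<delta>"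
    using reals_Archimedean3[OF \<open>\<delta> > 0\<close>] by blast
  with grow[of n] that show ?thesis
    by force
qed

lemma logistic_near_boundary_of_rate_bounded_below:
  fixes x r W :: "real \<Rightarrow> real" and m L \<epsilon> :: real
  assumes dx: "\<And>t. t \<ge> 0 \<Longrightarrow> (x has_real_derivative x t * (1 - x t) * W t) (at t within {0..})"
    and x: "\<And>t. t \<ge> 0 \<Longrightarrow> x t \<in> {0<..<1}"
    and W_nonneg: "\<And>t. t \<ge> 0 \<Longrightarrow> 0 \<le> W t"
    and W_lower: "\<And>t. t \<ge> 0 \<Longrightarrow> r t \<in> {\<epsilon>/2..1 - \<epsilon>/2} \<Longrightarrow> m \<le> W t" and "m > 0"
    and lipschitz: "\<And>s t. 0 \<le> t \<Longrightarrow> t \<le> s \<Longrightarrow> \<bar>r s - r t\<bar> \<le> L * (s - t)" and "L > 0"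
    and "\<epsilon> > 0"
  shows "\<forall>\<^sub>F t in at_top. x t < \<epsilon> \<or> 1 - x t < \<epsilon> \<or> r t < \<epsilon> \<or> 1 - r t < \<epsilon>"
proof (rule ccontr)
  assume "\<not> ?thesis"
  then have middle: "\<exists>\<^sub>F t in at_top. x t \<in> {\<epsilon>..1 - \<epsilon>} \<and> r t \<in> {\<epsilon>..1 - \<epsilon>}"
    by (simp add: not_eventually not_less) (auto elim: frequently_elim1)
  then have later: "\<exists>t'\<ge>t. x t' \<in> {\<epsilon>..1 - \<epsilon>} \<and> r t' \<in> {\<epsilon>..1 - \<epsilon>}" for t
    by (auto simp: frequently_def eventually_at_top_linorder)
  define U where "U t = ln (x t) - ln (1 - x t)" for t
  have dU: "(U has_real_derivative W t) (at t within {0..})" if "t \<ge> 0" for t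
    unfolding U_def[abs_def] by (rule has_real_derivative_logit[OF dx[OF that] x[OF that]])
  have U_mono: "U s \<le> U t" if "0 \<le> s" "s \<le> t" for s t
    by (rule DERIV_nonneg_imp_increasing_halfline[OF dU that]) (use W_nonneg that in auto)
  have U_bounded: "U t \<le> ln (1 - \<epsilon>) - ln \<epsilon>" if "t \<ge> 0" for t
  proof -
    obtain t' where t': "t' \<ge> t" "x t' \<in> {\<epsilon>..1 - \<epsilon>}"
      using later by blast
    then have "ln (x t') \<le> ln (1 - \<epsilon>)" "ln \<epsilon> \<le> ln (1 - x t')"
      using x[of t'] that \<open>\<epsilon> > 0\<close> by auto
    then have "U t' \<le> ln (1 - \<epsilon>) - ln \<epsilon>"
      unfolding U_def by linarith
    with U_mono[OF that \<open>t' \<ge> t\<close>] show ?thesis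
      by linarith
  qed
  define h where "h = \<epsilon> / (2 * L)"
  have "h > 0" "L * h = \<epsilon> / 2"
    using \<open>L > 0\<close> \<open>\<epsilon> > 0\<close> by (auto simp: h_def)
  have increment: "U t + m * h \<le> U (t + h)" if "t \<ge> 0" "r t \<in> {\<epsilon>..1 - \<epsilon>}" for t
  proof -
    have "U t - m * t \<le> U (t + h) - m * (t + h)"
    proof (rule DERIV_nonneg_imp_increasing_halfline[where f = "\<lambda>v. U v - m * v"
          and f' = "\<lambda>s. W s - m"])
      show "((\<lambda>v. U v - m * v) has_real_derivative W s - m) (at s within {0..})" if "s \<ge> 0" for s
        by (rule derivative_eq_intros refl dU[OF that])+ simp
      show "0 \<le> W s - m" if "t < s" "s < t + h" for s
      proof -
        have "\<bar>r s - r t\<bar> \<le> L * (s - t)"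
          using lipschitz[of t s] that \<open>t \<ge> 0\<close> by simp
        also have "\<dots> \<le> L * h"
          using that \<open>L > 0\<close> by (intro mult_left_mono) auto
        finally have "r s \<in> {\<epsilon>/2..1 - \<epsilon>/2}"
          using \<open>r t \<in> {\<epsilon>..1 - \<epsilon>}\<close> \<open>L * h = \<epsilon> / 2\<close> by (auto simp: abs_le_iff)
        then show ?thesis
          using W_lower[of s] that \<open>t \<ge> 0\<close> by simp
      qed
    qed (use that \<open>h > 0\<close> in auto)
    then show ?thesis
      by (simp add: algebra_simps)
  qed
  have "\<exists>\<^sub>F t in at_top. r t \<in> {\<epsilon>..1 - \<epsilon>}"
    using middle by (rule frequently_elim1) simp
  moreover have "m * h > 0" "h \<ge> 0"
    using \<open>m > 0\<close> \<open>h > 0\<close> by auto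
  ultimately obtain t where "t \<ge> 0" "U t > ln (1 - \<epsilon>) - ln \<epsilon>"
    using unbounded_of_frequent_increments[where U = U and Q = "\<lambda>t. r t \<in> {\<epsilon>..1 - \<epsilon>}",
        OF U_mono increment] by blast
  with U_bounded show False
    by fastforce
qed

lemma logistic_near_boundary_of_weak_dominance:
  fixes p1 p2 q1 q2 x y r :: "real \<Rightarrow> real"
  assumes aff: "affine_fun p1" "affine_fun p2" "affine_fun q1" "affine_fun q2"
    and dom: "weakly_dominates p1 p2 q1 q2"
    and dx: "\<And>t. t \<ge> 0 \<Longrightarrow> (x has_real_derivative
        x t * (1 - x t) * (y t * (p1 (r t) - q1 (r t)) + (1 - y t) * (p2 (r t) - q2 (r t))))
        (at t within {0..})"
    and state: "\<And>t. t \<ge> 0 \<Longrightarrow> x t \<in> {0<..<1} \<and> y t \<in> {0..1} \<and> r t \<in> {0..1}"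
    and lipschitz: "\<And>s t. 0 \<le> t \<Longrightarrow> t \<le> s \<Longrightarrow> \<bar>r s - r t\<bar> \<le> L * (s - t)" and "L > 0"
    and "0 < \<epsilon>" "\<epsilon> < 1"
  shows "\<forall>\<^sub>F t in at_top. x t < \<epsilon> \<or> 1 - x t < \<epsilon> \<or> r t < \<epsilon> \<or> 1 - r t < \<epsilon>"
proof -
  obtain m where "m > 0" and m: "\<And>y s. y \<in> {0..1} \<Longrightarrow> s \<in> {\<epsilon>/2..1 - \<epsilon>/2} \<Longrightarrow>
      m \<le> y * (p1 s - q1 s) + (1 - y) * (p2 s - q2 s)"
    using weakly_dominates_mix_bounded_below[OF aff dom, of "\<epsilon>/2"] \<open>0 < \<epsilon>\<close> \<open>\<epsilon> < 1\<close> by auto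
  show ?thesis
  proof (rule logistic_near_boundary_of_rate_bounded_below[OF dx _ _ _ \<open>m > 0\<close> lipschitz \<open>L > 0\<close>
        \<open>0 < \<epsilon>\<close>])
    fix t :: real assume "t \<ge> 0"
    then show "x t \<in> {0<..<1}"
      and "0 \<le> y t * (p1 (r t) - q1 (r t)) + (1 - y t) * (p2 (r t) - q2 (r t))"
      using state weakly_dominates_mix_nonneg[OF dom] by auto
    show "m \<le> y t * (p1 (r t) - q1 (r t)) + (1 - y t) * (p2 (r t) - q2 (r t))"
      if "r t \<in> {\<epsilon>/2..1 - \<epsilon>/2}"
      using m[OF _ that] state \<open>t \<ge> 0\<close> by auto
  qed
qed

lemma replicator_near_boundary_of_weak_dominance:
  fixes p1 p2 q1 q2 x y r :: "real \<Rightarrow> real"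
  assumes aff: "affine_fun p1" "affine_fun p2" "affine_fun q1" "affine_fun q2"
    and dom: "weakly_dominates p1 p2 q1 q2 \<or> weakly_dominates q1 q2 p1 p2"
    and dx: "\<And>t. t \<ge> 0 \<Longrightarrow> (x has_real_derivative
        x t * (1 - x t) * ((p1 (r t) - p2 (r t) - q1 (r t) + q2 (r t)) * y t + p2 (r t) - q2 (r t)))
        (at t within {0..})"
    and state: "\<And>t. t \<ge> 0 \<Longrightarrow> x t \<in> {0<..<1} \<and> y t \<in> {0..1} \<and> r t \<in> {0..1}"
    and lipschitz: "\<And>s t. 0 \<le> t \<Longrightarrow> t \<le> s \<Longrightarrow> \<bar>r s - r t\<bar> \<le> L * (s - t)" and "L > 0"
    and "0 < \<epsilon>" "\<epsilon> < 1"
  shows "\<forall>\<^sub>F t in at_top. x t < \<epsilon> \<or> 1 - x t < \<epsilon> \<or> r t < \<epsilon> \<or> 1 - r t < \<epsilon>"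
  using dom
proof
  assume "weakly_dominates p1 p2 q1 q2"
  then show ?thesis
  proof (rule logistic_near_boundary_of_weak_dominance[OF aff _ _ state lipschitz \<open>L > 0\<close> \<open>0 < \<epsilon>\<close> \<open>\<epsilon> < 1\<close>])
    show "(x has_real_derivative
        x t * (1 - x t) * (y t * (p1 (r t) - q1 (r t)) + (1 - y t) * (p2 (r t) - q2 (r t))))
        (at t within {0..})" if "t \<ge> 0" for t
      using dx[OF that] by (rule DERIV_cong) (simp add: algebra_simps)
  qed
next
  assume "weakly_dominates q1 q2 p1 p2"
  then have "\<forall>\<^sub>F t in at_top. 1 - x t < \<epsilon> \<or> 1 - (1 - x t) < \<epsilon> \<or> r t < \<epsilon> \<or> 1 - r t < \<epsilon>"
  proof (rule logistic_near_boundary_of_weak_dominance[where x = "\<lambda>t. 1 - x t",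
        OF aff(3,4,1,2) _ _ _ lipschitz \<open>L > 0\<close> \<open>0 < \<epsilon>\<close> \<open>\<epsilon> < 1\<close>])
    show "((\<lambda>t. 1 - x t) has_real_derivative
        (1 - x t) * (1 - (1 - x t)) * (y t * (q1 (r t) - p1 (r t)) + (1 - y t) * (q2 (r t) - p2 (r t))))
        (at t within {0..})" if "t \<ge> 0" for t
      using DERIV_diff[OF DERIV_const dx[OF that]] by (rule DERIV_cong) (simp add: algebra_simps)
  qed (use state in auto)
  then show ?thesis
    by (rule eventually_mono) auto
qed

lemma environment_feedback_abs_le:
  fixes x y \<theta>1 \<theta>2 :: real
  assumes "x \<in> {0..1}" "y \<in> {0..1}" "\<theta>1 \<ge> 0" "\<theta>2 \<ge> 0"
  shows "\<bar>(1 + \<theta>1) * x + (1 + \<theta>2) * y - 2\<bar> \<le> 2 + \<theta>1 + \<theta>2"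
proof -
  have "0 \<le> (1 + \<theta>1) * x" "(1 + \<theta>1) * x \<le> 1 + \<theta>1"
    "0 \<le> (1 + \<theta>2) * y" "(1 + \<theta>2) * y \<le> 1 + \<theta>2"
    using assms by (auto simp: mult_left_le)
  with assms(3,4) show ?thesis
    unfolding abs_le_iff by linarith
qed

lemma infdist_frontier_unit_cube3_le:
  assumes "x \<in> {0..1}" "y \<in> {0..1}" "r \<in> {0..1}"
  shows "infdist (x, y, r) (frontier unit_cube3) \<le> min (min x (1 - x)) (min r (1 - r))"
proof -
  have "frontier unit_cube3 = cbox (0, 0, 0) (1, 1, 1) - box (0, 0, 0) (1, 1, 1)"
    unfolding unit_cube3_def by (rule frontier_cbox)
  then have faces: "(0, y, r) \<in> frontier unit_cube3" "(1, y, r) \<in> frontier unit_cube3"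
    "(x, y, 0) \<in> frontier unit_cube3" "(x, y, 1) \<in> frontier unit_cube3"
    using assms by (auto simp: mem_box Basis_prod_def)
  show ?thesis
    using infdist_le[OF faces(1), of "(x, y, r)"] infdist_le[OF faces(2), of "(x, y, r)"]
      infdist_le[OF faces(3), of "(x, y, r)"] infdist_le[OF faces(4), of "(x, y, r)"] assms
    by (simp add: dist_Pair_Pair dist_real_def)
qed

lemma tendsto_infdist_frontier_unit_cube3:
  fixes x y r :: "real \<Rightarrow> real"
  assumes state: "\<And>t. t \<ge> 0 \<Longrightarrow> x t \<in> {0..1} \<and> y t \<in> {0..1} \<and> r t \<in> {0..1}"
    and near: "\<And>\<epsilon>. 0 < \<epsilon> \<Longrightarrow> \<epsilon> < 1 \<Longrightarrow>
      \<forall>\<^sub>F t in at_top. x t < \<epsilon> \<or> 1 - x t < \<epsilon> \<or> r t < \<epsilon> \<or> 1 - r t < \<epsilon>"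
  shows "((\<lambda>t. infdist (x t, y t, r t) (frontier unit_cube3)) \<longlongrightarrow> 0) at_top"
proof (rule tendstoI)
  fix e :: real assume "e > 0"
  have "\<forall>\<^sub>F t in at_top. t \<ge> 0 \<and>
      (x t < min e (1/2) \<or> 1 - x t < min e (1/2) \<or> r t < min e (1/2) \<or> 1 - r t < min e (1/2))"
    using \<open>e > 0\<close> by (intro eventually_conj eventually_ge_at_top near) auto
  then show "\<forall>\<^sub>F t in at_top. dist (infdist (x t, y t, r t) (frontier unit_cube3)) 0 < e"
  proof (rule eventually_mono)
    fix t assume t: "t \<ge> 0 \<and>
      (x t < min e (1/2) \<or> 1 - x t < min e (1/2) \<or> r t < min e (1/2) \<or> 1 - r t < min e (1/2))"
    with state have "infdist (x t, y t, r t) (frontier unit_cube3) < e"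
      using infdist_frontier_unit_cube3_le[of "x t" "y t" "r t"] by force
    then show "dist (infdist (x t, y t, r t) (frontier unit_cube3)) 0 < e"
      by (simp add: infdist_nonneg)
  qed
qed

lemma replicator_rate_abs_bounded:
  assumes "affine_fun p1" "affine_fun p2" "affine_fun q1" "affine_fun q2"
  obtains K where "\<And>y s. y \<in> {0..1::real} \<Longrightarrow> s \<in> {0..1} \<Longrightarrow>
    \<bar>(p1 s - p2 s - q1 s + q2 s) * y + p2 s - q2 s\<bar> \<le> K"
proof -
  obtain K where K: "\<And>y s. y \<in> {0..1::real} \<Longrightarrow> s \<in> {0..1} \<Longrightarrow>
      \<bar>y * (p1 s - q1 s) + (1 - y) * (p2 s - q2 s)\<bar> \<le> K"
    using affine_mix_abs_bounded[OF affine_fun_diff[OF assms(1,3)] affine_fun_diff[OF assms(2,4)]] by blast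
  show ?thesis
  proof (rule that)
    fix y s :: real
    assume "y \<in> {0..1}" "s \<in> {0..1}"
    have "(p1 s - p2 s - q1 s + q2 s) * y + p2 s - q2 s
        = y * (p1 s - q1 s) + (1 - y) * (p2 s - q2 s)"
      by (simp add: algebra_simps)
    with K[OF \<open>y \<in> {0..1}\<close> \<open>s \<in> {0..1}\<close>]
    show "\<bar>(p1 s - p2 s - q1 s + q2 s) * y + p2 s - q2 s\<bar> \<le> K"
      by simp
  qed
qed

theorem theorem1:
  fixes a b c d e f g k :: "real \<Rightarrow> real"
    and \<theta>1 \<theta>2 :: real
    and x y r :: "real \<Rightarrow> real"
  assumes aff: "affine_fun a" "affine_fun b" "affine_fun c" "affine_fun d"
               "affine_fun e" "affine_fun f" "affine_fun g" "affine_fun k"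
    and theta: "\<theta>1 > 0" "\<theta>2 > 0"
    and dom1: "weakly_dominates a b c d \<or> weakly_dominates c d a b"
    and dom2: "weakly_dominates e f g k \<or> weakly_dominates g k e f"
    and init: "x 0 \<in> {0<..<1}" "y 0 \<in> {0<..<1}" "r 0 \<in> {0<..<1}"
    and ode_x: "\<And>t. t \<ge> 0 \<Longrightarrow> (x has_real_derivative
        x t * (1 - x t) * ((a (r t) - b (r t) - c (r t) + d (r t)) * y t + b (r t) - d (r t)))
        (at t within {0..})"
    and ode_y: "\<And>t. t \<ge> 0 \<Longrightarrow> (y has_real_derivative
        y t * (1 - y t) * ((e (r t) - f (r t) - g (r t) + k (r t)) * x t + f (r t) - k (r t)))
        (at t within {0..})"
    and ode_r: "\<And>t. t \<ge> 0 \<Longrightarrow> (r has_real_derivative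
        r t * (1 - r t) * ((1 + \<theta>1) * x t + (1 + \<theta>2) * y t - 2))
        (at t within {0..})"
  shows "((\<lambda>t. infdist (x t, y t, r t) (frontier unit_cube3)) \<longlongrightarrow> 0) at_top"
proof -
  define L where "L = 2 + \<theta>1 + \<theta>2"
  have "L > 0" and feedback: "\<And>x y. x \<in> {0..1} \<Longrightarrow> y \<in> {0..1} \<Longrightarrow>
      \<bar>(1 + \<theta>1) * x + (1 + \<theta>2) * y - 2\<bar> \<le> L"
    using theta environment_feedback_abs_le by (auto simp: L_def)
  obtain K1 K2 where
    K1: "\<And>y s. y \<in> {0..1} \<Longrightarrow> s \<in> {0..1} \<Longrightarrow> \<bar>(a s - b s - c s + d s) * y + b s - d s\<bar> \<le> K1" and
    K2: "\<And>x s. x \<in> {0..1} \<Longrightarrow> s \<in> {0..1} \<Longrightarrow> \<bar>(e s - f s - g s + k s) * x + f s - k s\<bar> \<le> K2"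
    using replicator_rate_abs_bounded[OF aff(1-4)] replicator_rate_abs_bounded[OF aff(5-8)] by metis
  have in_cube: "x t \<in> {0<..<1} \<and> y t \<in> {0<..<1} \<and> r t \<in> {0<..<1}" if "t \<ge> 0" for t
  proof (rule logistic_system_stays_in_open_cube[OF ode_x ode_y ode_r _ init that])
    fix t assume "x t \<in> {0..1}" "y t \<in> {0..1}" "r t \<in> {0..1}"
    then show "\<bar>(a (r t) - b (r t) - c (r t) + d (r t)) * y t + b (r t) - d (r t)\<bar> \<le> max K1 (max K2 L)
      \<and> \<bar>(e (r t) - f (r t) - g (r t) + k (r t)) * x t + f (r t) - k (r t)\<bar> \<le> max K1 (max K2 L)
      \<and> \<bar>(1 + \<theta>1) * x t + (1 + \<theta>2) * y t - 2\<bar> \<le> max K1 (max K2 L)"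
      using K1[of "y t" "r t"] K2[of "x t" "r t"] feedback[of "x t" "y t"] by linarith
  qed
  have in_closed_cube: "x t \<in> {0..1} \<and> y t \<in> {0..1} \<and> r t \<in> {0..1}" if "t \<ge> 0" for t
    using in_cube[OF that] by auto
  have lipschitz: "\<bar>r s - r t\<bar> \<le> L * (s - t)" if "0 \<le> t" "t \<le> s" for s t
  proof (rule DERIV_bounded_imp_lipschitz_halfline[OF ode_r _ that])
    fix u :: real assume "u \<ge> 0"
    then have "0 \<le> r u" "r u \<le> 1" "\<bar>(1 + \<theta>1) * x u + (1 + \<theta>2) * y u - 2\<bar> \<le> L"
      using in_closed_cube[of u] feedback[of "x u" "y u"] by auto
    then show "\<bar>r u * (1 - r u) * ((1 + \<theta>1) * x u + (1 + \<theta>2) * y u - 2)\<bar> \<le> L"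
      by (rule logistic_term_bounds(3))
  qed
  have near: "\<forall>\<^sub>F t in at_top. x t < \<epsilon> \<or> 1 - x t < \<epsilon> \<or> r t < \<epsilon> \<or> 1 - r t < \<epsilon>"
    if "0 < \<epsilon>" "\<epsilon> < 1" for \<epsilon>
  proof (rule replicator_near_boundary_of_weak_dominance[OF aff(1-4) dom1 ode_x _ lipschitz \<open>L > 0\<close> that])
    show "x t \<in> {0<..<1} \<and> y t \<in> {0..1} \<and> r t \<in> {0..1}" if "t \<ge> 0" for t
      using in_cube[OF that] in_closed_cube[OF that] by blast
  qed
  show ?thesis
    by (rule tendsto_infdist_frontier_unit_cube3[OF in_closed_cube near])
qed

end
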